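(* Let $G$ be a Feynman diagram and $A_G\subseteq\mathbb{Z}^n$ the support of $\mathcal{F}_{z,m}$ for generic $(z,m)\in\mathbb{R}^K\times\mathbb{R}^{\mathcal{E}}$. If $a\in A_G\cap A^1_G$ and the coefficient of $x^a$ in $\mathcal{F}_{z,m}$, viewed as a linear function of $(z,m)$, does not depend on any of the $m_e$ ($e\in\mathcal{E}$), then $a$ is a vertex of $\operatorname{conv}(A_G)$.
   Context: $G$ is a connected graph with $n$ internal edges labeled $1,\dots,n$ carrying variables $x_1,\dots,x_n$ and $N$ external edges (edges with an endpoint of degree one), the external ones labeled by $[N]$. $\mathcal{T}$ is the set of spanning trees of $G$ (restricted to internal edges, viewed as subsets of $[n]$); $\ell=\#\text{edges}-\#\text{vertices}+1$. The first Symanzik polynomial is $\mathcal{U}(x)=\sum_{T\in\mathcal{T}}\prod_{e\notin T}x_e$. $\mathcal{W}$ is the set of spanning 2-forests $\{T_1,T_2\}$ (two disjoint acyclic connected subgraphs covering all vertices). Given a linear map $L:\mathbb{R}^K\to\mathbb{R}^{\mathcal{W}}$ and $\mathcal{E}\subseteq[n]$, $\mathcal{F}_{z,m}(x)=\sum_{\{T_1,T_2\}\in\mathcal{W}}L_{T_1,T_2}(z)\prod_{e\notin T_1\sqcup T_2}x_e+\big(\sum_{e\in\mathcal{E}}m_ex_e\big)\mathcal{U}(x)$. Set $A^1_G=\{e_p+\sum_{j\in[n]\setminus T}e_j: T\in\mathcal{T}, p\in T\}$ and $A^2_G=\{2e_q+\sum_{j\in[n]\setminus(T\cup\{q\})}e_j:T\in\mathcal{T},q\notin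 T\}$; $A_G\subseteq A^1_G\cup A^2_G$. *)

theory Defs
  imports "HOL-Analysis.Analysis" "HOL-Library.Function_Algebras"
begin

text \<open>
  The internal part of a Feynman diagram G: a finite vertex set V and internal
  edges given by the elements of a finite type 'e (playing the role of [n]),
  each edge e having endpoints ends e (multi-edges and self-loops allowed).
  External legs only enter through the abstract linear map L and play no
  further role in the statement.
\<close>

definition adj :: "('e \<Rightarrow> 'v \<times> 'v) \<Rightarrow> 'e set \<Rightarrow> ('v \<times> 'v) set" where
  "adj ends S = {(u, v). \<exists>e\<in>S. ends e = (u, v) \<or> ends e = (v, u)}"

definition conn :: "('e \<Rightarrow> 'v \<times> 'v) \<Rightarrow> 'e set \<Rightarrow> 'v \<Rightarrow> 'v \<Rightarrow> bool" where
  "conn ends S u v \<longleftrightarrow> (u, v) \<in> (adj ends S)\<^sup>*"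

text \<open>An edge set is acyclic iff no edge lies on a cycle, i.e. the endpoints of
  each edge e are not joined by a path avoiding e (this also excludes loops).\<close>
definition acyclic_edges :: "('e \<Rightarrow> 'v \<times> 'v) \<Rightarrow> 'e set \<Rightarrow> bool" where
  "acyclic_edges ends S \<longleftrightarrow>
     (\<forall>e\<in>S. \<not> conn ends (S - {e}) (fst (ends e)) (snd (ends e)))"

definition spanning_trees :: "'v set \<Rightarrow> ('e \<Rightarrow> 'v \<times> 'v) \<Rightarrow> 'e set set" where
  "spanning_trees V ends =
     {T. acyclic_edges ends T \<and> (\<forall>u\<in>V. \<forall>v\<in>V. conn ends T u v)}"

definition is_subtree :: "('e \<Rightarrow> 'v \<times> 'v) \<Rightarrow> 'v set \<Rightarrow> 'e set \<Rightarrow> bool" where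
  "is_subtree ends Vi Ti \<longleftrightarrow> Vi \<noteq> {} \<and>
     (\<forall>e\<in>Ti. fst (ends e) \<in> Vi \<and> snd (ends e) \<in> Vi) \<and>
     acyclic_edges ends Ti \<and> (\<forall>u\<in>Vi. \<forall>v\<in>Vi. conn ends Ti u v)"

definition spanning_2forests :: "'v set \<Rightarrow> ('e \<Rightarrow> 'v \<times> 'v) \<Rightarrow> ('v set \<times> 'e set) set set" where
  "spanning_2forests V ends =
     {w. \<exists>V1 T1 V2 T2. w = {(V1, T1), (V2, T2)} \<and> V1 \<inter> V2 = {} \<and> V1 \<union> V2 = V \<and>
          T1 \<inter> T2 = {} \<and> is_subtree ends V1 T1 \<and> is_subtree ends V2 T2}"

text \<open>Polynomials in the variables x_e (e :: 'e) are represented by their coefficient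
  functions on exponent vectors 'e \<Rightarrow> nat.  mono c \<alpha> is the monomial c x^\<alpha>.\<close>
definition mono :: "'b::zero \<Rightarrow> ('e \<Rightarrow> nat) \<Rightarrow> ('e \<Rightarrow> nat) \<Rightarrow> 'b" where
  "mono c \<alpha> = (\<lambda>\<beta>. if \<beta> = \<alpha> then c else 0)"

definition ind :: "'e set \<Rightarrow> 'e \<Rightarrow> nat" where
  "ind S = (\<lambda>j. if j \<in> S then 1 else 0)"

definition unitv :: "'e \<Rightarrow> 'e \<Rightarrow> nat" where
  "unitv e = (\<lambda>j. if j = e then 1 else 0)"

definition Upoly :: "'v set \<Rightarrow> ('e \<Rightarrow> 'v \<times> 'v) \<Rightarrow> ('e \<Rightarrow> nat) \<Rightarrow> real" where
  "Upoly V ends = (\<Sum>T\<in>spanning_trees V ends. mono 1 (ind (- T)))"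

text \<open>F_{z,m}(x) = sum_{{T1,T2}} L_{T1,T2}(z) prod_{e notin T1 u T2} x_e
   + (sum_{e in E} m_e x_e) U(x), with the product (sum m_e x_e) U(x) expanded
   into monomials.\<close>
definition Fpoly :: "'v set \<Rightarrow> ('e \<Rightarrow> 'v \<times> 'v) \<Rightarrow> (('v set \<times> 'e set) set \<Rightarrow> 'z \<Rightarrow> real)
    \<Rightarrow> 'e set \<Rightarrow> 'z \<Rightarrow> ('e \<Rightarrow> real) \<Rightarrow> ('e \<Rightarrow> nat) \<Rightarrow> real" where
  "Fpoly V ends L E z m =
     (\<Sum>w\<in>spanning_2forests V ends. mono (L w z) (ind (- \<Union>(snd ` w))))
   + (\<Sum>e\<in>E. \<Sum>T\<in>spanning_trees V ends. mono (m e) (\<lambda>j. unitv e j + ind (- T) j))"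

text \<open>A_G: support of F_{z,m} for generic parameters, i.e. the exponents whose
  coefficient (a linear function of (z,m)) is not identically zero.\<close>
definition AG :: "'v set \<Rightarrow> ('e \<Rightarrow> 'v \<times> 'v) \<Rightarrow> (('v set \<times> 'e set) set \<Rightarrow> 'z \<Rightarrow> real)
    \<Rightarrow> 'e set \<Rightarrow> ('e \<Rightarrow> nat) set" where
  "AG V ends L E = {a. \<exists>z m. Fpoly V ends L E z m a \<noteq> 0}"

definition AG1 :: "'v set \<Rightarrow> ('e \<Rightarrow> 'v \<times> 'v) \<Rightarrow> ('e \<Rightarrow> nat) set" where
  "AG1 V ends = {(\<lambda>j. unitv p j + ind (- T) j) | T p. T \<in> spanning_trees V ends \<and> p \<in> T}"

definition AG2 :: "'v set \<Rightarrow> ('e \<Rightarrow> 'v \<times> 'v) \<Rightarrow> ('e \<Rightarrow> nat) set" where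
  "AG2 V ends = {(\<lambda>j. 2 * unitv q j + ind (- (T \<union> {q})) j) | T q. T \<in> spanning_trees V ends \<and> q \<notin> T}"

definition to_real :: "('e::finite \<Rightarrow> nat) \<Rightarrow> real ^ 'e" where
  "to_real a = (\<chi> i. real (a i))"

end

theory Submission
  imports Defs
begin

(*
  Write a = e_p + sum_{j \<notin> T0} e_j as the indicator vector of S = {p} \<union> ([n] - T0) and
  weigh coordinates by c_j = -2 for j \<notin> S, c_j = 0 for j \<in> S \<inter> E and c_j = 1 for
  j \<in> S - E.  Spanning trees have |V| - 1 edges and spanning 2-forests |V| - 2, so every
  other point of A_G is either the indicator vector of a set X \<noteq> S with |X| = |S|, which
  leaves S and therefore loses at least 2, or has the form e_q + 1_{[n] - T} with q \<in> E - T.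
  In the latter case c_q \<le> 0; and if [n] - T \<subseteq> S then S = {r} \<union> ([n] - T) with r \<in> T, where
  r \<notin> E because otherwise the coefficient of a would depend on m_r, so c_r = 1.  Thus the
  linear functional c is maximised over A_G exactly at a.
*)

lemma adj_sym: "(u, v) \<in> adj ends S \<Longrightarrow> (v, u) \<in> adj ends S"
  by (auto simp: adj_def)

lemma conn_refl [simp]: "conn ends S u u"
  by (simp add: conn_def)

lemma conn_trans: "conn ends S u v \<Longrightarrow> conn ends S v w \<Longrightarrow> conn ends S u w"
  by (auto simp: conn_def)

lemma conn_sym: "conn ends S u v \<Longrightarrow> conn ends S v u"
  unfolding conn_def
proof (induction rule: rtrancl_induct)
  case (step y z)
  then show ?case by (meson adj_sym converse_rtrancl_into_rtrancl)
qed simp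

lemma conn_mono: "S \<subseteq> S' \<Longrightarrow> conn ends S u v \<Longrightarrow> conn ends S' u v"
  unfolding conn_def by (rule rtrancl_mono[THEN subsetD]) (auto simp: adj_def)

lemma conn_empty_iff: "conn ends {} u v \<longleftrightarrow> u = v"
  by (simp add: conn_def adj_def)

lemma conn_insert_iff:
  fixes ends :: "'e \<Rightarrow> 'v \<times> 'v" and e :: 'e and x y
  defines "x \<equiv> fst (ends e)" and "y \<equiv> snd (ends e)"
  shows "conn ends (insert e F) u v \<longleftrightarrow>
    conn ends F u v \<or> (conn ends F u x \<and> conn ends F y v) \<or> (conn ends F u y \<and> conn ends F x v)"
proof
  have "adj ends (insert e F) = adj ends F \<union> {(x, y), (y, x)}"
    by (auto simp: adj_def x_def y_def)
  moreover assume "conn ends (insert e F) u v"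
  ultimately have "(u, v) \<in> (adj ends F \<union> {(x, y), (y, x)})\<^sup>*"
    by (simp add: conn_def)
  then show "conn ends F u v \<or> (conn ends F u x \<and> conn ends F y v) \<or> (conn ends F u y \<and> conn ends F x v)"
  proof (induction rule: rtrancl_induct)
    case (step w z)
    then have "conn ends F w z \<or> w = x \<and> z = y \<or> w = y \<and> z = x"
      by (auto simp: conn_def)
    then show ?case
      using step.IH conn_trans conn_refl by metis
  qed simp
next
  have "conn ends (insert e F) x y" "conn ends (insert e F) y x"
    by (auto simp: conn_def adj_def x_def y_def)
  moreover have "conn ends F a b \<Longrightarrow> conn ends (insert e F) a b" for a b
    by (meson conn_mono subset_insertI)
  moreover assume "conn ends F u v \<or> (conn ends F u x \<and> conn ends F y v) \<or> (conn ends F u y \<and> conn ends F x v)"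
  ultimately show "conn ends (insert e F) u v"
    using conn_trans by metis
qed

lemma acyclic_edges_subset: "acyclic_edges ends S \<Longrightarrow> S' \<subseteq> S \<Longrightarrow> acyclic_edges ends S'"
  unfolding acyclic_edges_def by (meson Diff_mono conn_mono order_refl subsetD)

definition component :: "('e \<Rightarrow> 'v \<times> 'v) \<Rightarrow> 'e set \<Rightarrow> 'v set \<Rightarrow> 'v \<Rightarrow> 'v set" where
  "component ends F W v = {u\<in>W. conn ends F v u}"

definition ncomp :: "('e \<Rightarrow> 'v \<times> 'v) \<Rightarrow> 'e set \<Rightarrow> 'v set \<Rightarrow> nat" where
  "ncomp ends F W = card (component ends F W ` W)"

lemma component_eq_iff:
  assumes "v \<in> W" "w \<in> W"
  shows "component ends F W v = component ends F W w \<longleftrightarrow> conn ends F v w"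
  using assms unfolding component_def by (auto intro: conn_trans conn_sym)

lemma component_insert:
  fixes ends :: "'e \<Rightarrow> 'v \<times> 'v" and e :: 'e and x y
  defines "x \<equiv> fst (ends e)" and "y \<equiv> snd (ends e)"
  shows "component ends (insert e F) W v =
    (if conn ends F v x \<or> conn ends F v y
     then component ends F W x \<union> component ends F W y else component ends F W v)"
  unfolding component_def conn_insert_iff x_def[symmetric] y_def[symmetric]
  by (auto intro: conn_trans conn_sym)

lemma ncomp_empty: "ncomp ends {} W = card W"
proof -
  have "component ends {} W ` W = (\<lambda>v. {v}) ` W"
    by (auto simp: component_def conn_empty_iff)
  then show ?thesis
    by (simp add: ncomp_def card_image)
qed

lemma component_image_insert:
  fixes ends :: "'e \<Rightarrow> 'v \<times> 'v" and e :: 'e and x y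
  defines "x \<equiv> fst (ends e)" and "y \<equiv> snd (ends e)"
  assumes xy: "x \<in> W" "y \<in> W"
  shows "component ends (insert e F) W ` W =
    insert (component ends F W x \<union> component ends F W y)
      (component ends F W ` W - {component ends F W x, component ends F W y})"
    (is "?C' ` W = insert (?C x \<union> ?C y) (?C ` W - {?C x, ?C y})")
proof -
  have C'_eq: "?C' v = (if conn ends F v x \<or> conn ends F v y then ?C x \<union> ?C y else ?C v)" for v
    unfolding x_def y_def by (rule component_insert)
  have C_eq: "?C v = ?C w \<longleftrightarrow> conn ends F v w" if "v \<in> W" "w \<in> W" for v w
    using that by (rule component_eq_iff)
  show ?thesis
  proof (intro equalityI subsetI)
    fix D assume "D \<in> ?C' ` W"
    then obtain v where v: "v \<in> W" "D = ?C' v"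
      by blast
    show "D \<in> insert (?C x \<union> ?C y) (?C ` W - {?C x, ?C y})"
    proof (cases "conn ends F v x \<or> conn ends F v y")
      case False
      then show ?thesis
        using v C'_eq C_eq[OF v(1) xy(1)] C_eq[OF v(1) xy(2)] by auto
    qed (use v C'_eq in simp)
  next
    fix D assume "D \<in> insert (?C x \<union> ?C y) (?C ` W - {?C x, ?C y})"
    then consider "D = ?C x \<union> ?C y"
      | v where "v \<in> W" "D = ?C v" "?C v \<noteq> ?C x" "?C v \<noteq> ?C y"
      by blast
    then show "D \<in> ?C' ` W"
    proof cases
      case 1
      then have "D = ?C' x"
        using C'_eq by simp
      then show ?thesis
        using xy(1) by blast
    next
      case 2
      then have "D = ?C' v"
        using C'_eq C_eq[OF 2(1) xy(1)] C_eq[OF 2(1) xy(2)] by simp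
      then show ?thesis
        using 2(1) by blast
    qed
  qed
qed

lemma ncomp_insert:
  fixes ends :: "'e \<Rightarrow> 'v \<times> 'v" and e :: 'e and x y
  defines "x \<equiv> fst (ends e)" and "y \<equiv> snd (ends e)"
  assumes fin: "finite W" and xy: "x \<in> W" "y \<in> W" and new_edge: "\<not> conn ends F x y"
  shows "ncomp ends (insert e F) W + 1 = ncomp ends F W"
proof -
  let ?C = "component ends F W"
  have C_eq: "?C v = ?C w \<longleftrightarrow> conn ends F v w" if "v \<in> W" "w \<in> W" for v w
    using that by (rule component_eq_iff)
  have "?C x \<noteq> ?C y"
    using C_eq[OF xy] new_edge by simp
  moreover have "?C x \<union> ?C y \<notin> ?C ` W - {?C x, ?C y}"
  proof
    assume "?C x \<union> ?C y \<in> ?C ` W - {?C x, ?C y}"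
    then obtain v where v: "v \<in> W" "?C v = ?C x \<union> ?C y" "?C v \<noteq> ?C x"
      by auto
    then have "x \<in> ?C v"
      using xy(1) by (auto simp: component_def)
    then show False
      using v C_eq[OF v(1) xy(1)] by (simp add: component_def)
  qed
  moreover have "{?C x, ?C y} \<subseteq> ?C ` W"
    using xy by auto
  moreover from this have "card {?C x, ?C y} \<le> card (?C ` W)"
    using fin by (intro card_mono) auto
  ultimately show ?thesis
    using fin xy unfolding x_def y_def
    by (simp add: ncomp_def component_image_insert card_Diff_subset)
qed

lemma ncomp_add_card_acyclic:
  assumes "finite W" "finite F" "acyclic_edges ends F"
    "\<forall>e\<in>F. fst (ends e) \<in> W \<and> snd (ends e) \<in> W"
  shows "ncomp ends F W + card F = card W"
  using assms(2-4)
proof (induction F rule: finite_induct)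
  case empty
  then show ?case by (simp add: ncomp_empty)
next
  case (insert e F)
  have "\<not> conn ends F (fst (ends e)) (snd (ends e))"
    using insert.hyps(2) insert.prems(1) by (auto simp: acyclic_edges_def)
  then have "ncomp ends (insert e F) W + 1 = ncomp ends F W"
    using assms(1) insert.prems(2) by (intro ncomp_insert) auto
  moreover have "ncomp ends F W + card F = card W"
    using insert.IH insert.prems acyclic_edges_subset by blast
  ultimately show ?case
    using insert.hyps by simp
qed

lemma card_tree_edges:
  assumes "finite W" "W \<noteq> {}" "finite F" "acyclic_edges ends F"
    "\<forall>e\<in>F. fst (ends e) \<in> W \<and> snd (ends e) \<in> W"
    "\<forall>u\<in>W. \<forall>v\<in>W. conn ends F u v"
  shows "card F + 1 = card W"
proof -
  have "component ends F W ` W = {W}"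
    using assms(2,6) by (auto simp: component_def)
  then have "ncomp ends F W = 1"
    by (simp add: ncomp_def)
  then show ?thesis
    using ncomp_add_card_acyclic[OF assms(1,3-5)] by simp
qed

lemma card_spanning_tree:
  fixes ends :: "'e::finite \<Rightarrow> 'v \<times> 'v"
  assumes "finite V" "V \<noteq> {}" "\<forall>e. fst (ends e) \<in> V \<and> snd (ends e) \<in> V"
    "T \<in> spanning_trees V ends"
  shows "card T + 1 = card V"
  using assms by (intro card_tree_edges) (auto simp: spanning_trees_def)

lemma card_spanning_2forest:
  fixes ends :: "'e::finite \<Rightarrow> 'v \<times> 'v"
  assumes "finite V" "w \<in> spanning_2forests V ends"
  shows "card (\<Union>(snd ` w)) + 2 = card V"
proof -
  obtain V1 T1 V2 T2 where w: "w = {(V1, T1), (V2, T2)}" "V1 \<inter> V2 = {}" "V1 \<union> V2 = V"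
    "T1 \<inter> T2 = {}" "is_subtree ends V1 T1" "is_subtree ends V2 T2"
    using assms(2) unfolding spanning_2forests_def by blast
  have fin: "finite V1" "finite V2"
    using assms(1) w(3) by auto
  have "card T1 + 1 = card V1"
    using w(5) fin(1) by (intro card_tree_edges) (auto simp: is_subtree_def)
  moreover have "card T2 + 1 = card V2"
    using w(6) fin(2) by (intro card_tree_edges) (auto simp: is_subtree_def)
  moreover have "card (\<Union>(snd ` w)) = card T1 + card T2"
    using w(1,4) by (simp add: card_Un_disjoint)
  moreover have "card V = card V1 + card V2"
    using w(2,3) fin by (metis card_Un_disjoint)
  ultimately show ?thesis
    by simp
qed

lemma card_Compl_eq: "card (- X) = CARD('e) - card X" for X :: "'e::finite set"
  by (metis Compl_eq_Diff_UNIV card_Diff_subset finite subset_UNIV)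

lemma card_Compl_spanning_2forest:
  fixes ends :: "'e::finite \<Rightarrow> 'v \<times> 'v"
  assumes "finite V" "V \<noteq> {}" "\<forall>e. fst (ends e) \<in> V \<and> snd (ends e) \<in> V"
    "T \<in> spanning_trees V ends" "w \<in> spanning_2forests V ends"
  shows "card (- \<Union>(snd ` w)) = card (- T) + 1"
proof -
  have "card T \<le> CARD('e)"
    by (rule card_mono) auto
  moreover have "card (- \<Union>(snd ` w)) = CARD('e) - card (\<Union>(snd ` w))"
    by (rule card_Compl_eq)
  ultimately show ?thesis
    using card_spanning_tree[OF assms(1-4)] card_spanning_2forest[OF assms(1,5)]
      card_Compl_eq[of T] by linarith
qed

lemma finite_spanning_2forests:
  fixes ends :: "'e::finite \<Rightarrow> 'v \<times> 'v"
  assumes "finite V"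
  shows "finite (spanning_2forests V ends)"
proof (rule finite_subset)
  show "spanning_2forests V ends \<subseteq> Pow (Pow V \<times> UNIV)"
    unfolding spanning_2forests_def by blast
  show "finite (Pow (Pow V \<times> (UNIV :: 'e set set)))"
    using assms by (simp add: finite_cartesian_product)
qed

lemma sum_fun_apply: "sum f A x = (\<Sum>a\<in>A. f a x)"
  for f :: "'a \<Rightarrow> 'b \<Rightarrow> 'c::comm_monoid_add"
  by (induction A rule: infinite_finite_induct) auto

lemma Fpoly_apply:
  "Fpoly V ends L E z m b =
     (\<Sum>w\<in>spanning_2forests V ends. if b = ind (- \<Union>(snd ` w)) then L w z else 0)
   + (\<Sum>e\<in>E. \<Sum>T\<in>spanning_trees V ends. if b = (\<lambda>j. unitv e j + ind (- T) j) then m e else 0)"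
  by (simp add: Fpoly_def sum_fun_apply mono_def)

lemma AG_cases:
  assumes "b \<in> AG V ends L E"
  obtains (forest) w where "w \<in> spanning_2forests V ends" "b = ind (- \<Union>(snd ` w))"
    | (mass) q T where "q \<in> E" "T \<in> spanning_trees V ends" "b = (\<lambda>j. unitv q j + ind (- T) j)"
proof -
  from assms obtain z m where "Fpoly V ends L E z m b \<noteq> 0"
    by (auto simp: AG_def)
  then consider
      "(\<Sum>w\<in>spanning_2forests V ends. if b = ind (- \<Union>(snd ` w)) then L w z else 0) \<noteq> 0"
    | "(\<Sum>e\<in>E. \<Sum>T\<in>spanning_trees V ends. if b = (\<lambda>j. unitv e j + ind (- T) j) then m e else 0) \<noteq> 0"
    unfolding Fpoly_apply by fastforce
  then show ?thesis
  proof cases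
    case 1
    then obtain w where "w \<in> spanning_2forests V ends"
        "(if b = ind (- \<Union>(snd ` w)) then L w z else 0) \<noteq> 0"
      by (rule sum.not_neutral_contains_not_neutral)
    then show ?thesis
      using that(1) by (simp split: if_splits)
  next
    case 2
    then obtain q where "q \<in> E"
        "(\<Sum>T\<in>spanning_trees V ends. if b = (\<lambda>j. unitv q j + ind (- T) j) then m q else 0) \<noteq> 0"
      by (rule sum.not_neutral_contains_not_neutral)
    moreover from this(2) obtain T where "T \<in> spanning_trees V ends"
        "(if b = (\<lambda>j. unitv q j + ind (- T) j) then m q else 0) \<noteq> 0"
      by (rule sum.not_neutral_contains_not_neutral)
    ultimately show ?thesis
      using that(2) by (simp split: if_splits)
  qed
qed

lemma finite_AG:
  fixes ends :: "'e::finite \<Rightarrow> 'v \<times> 'v"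
  assumes "finite V"
  shows "finite (AG V ends L E)"
proof (rule finite_subset)
  show "AG V ends L E \<subseteq> (\<lambda>w. ind (- \<Union>(snd ` w))) ` spanning_2forests V ends \<union>
      (\<lambda>(q, T) j. unitv q j + ind (- T) j) ` (E \<times> spanning_trees V ends)"
    by (auto elim!: AG_cases)
  show "finite ((\<lambda>w. ind (- \<Union>(snd ` w))) ` spanning_2forests V ends \<union>
      (\<lambda>(q, T) j. unitv q j + ind (- T) j) ` (E \<times> spanning_trees V ends))"
    using assms by (simp add: finite_spanning_2forests)
qed

lemma mass_free_coeff_notin:
  fixes ends :: "'e::finite \<Rightarrow> 'v \<times> 'v"
  assumes mass_free: "\<forall>z m m'. Fpoly V ends L E z m b = Fpoly V ends L E z m' b"
    and "T \<in> spanning_trees V ends" "b = (\<lambda>j. unitv r j + ind (- T) j)"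
  shows "r \<notin> E"
proof
  assume "r \<in> E"
  have "0 < (\<Sum>T\<in>spanning_trees V ends. if b = (\<lambda>j. unitv r j + ind (- T) j) then 1 else 0 :: real)"
    using assms(2,3) by (intro sum_pos2) auto
  then have "0 < (\<Sum>e\<in>E. \<Sum>T\<in>spanning_trees V ends.
      if b = (\<lambda>j. unitv e j + ind (- T) j) then if e = r then 1 else 0 else 0 :: real)"
    using \<open>r \<in> E\<close> by (intro sum_pos2[where i = r]) (auto intro!: sum_nonneg)
  then have "Fpoly V ends L E z (\<lambda>j. if j = r then 1 else 0) b \<noteq> Fpoly V ends L E z (\<lambda>_. 0) b"
    for z
    unfolding Fpoly_apply by simp
  then show False
    using mass_free by blast
qed

lemma unitv_add_ind: "q \<notin> X \<Longrightarrow> (\<lambda>j. unitv q j + ind X j) = ind (insert q X)"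
  by (auto simp: fun_eq_iff unitv_def ind_def)

lemma inner_to_real: "inner (\<chi> j. c j) (to_real b) = (\<Sum>j\<in>UNIV. c j * real (b j))"
  by (simp add: inner_vec_def to_real_def)

lemma inner_to_real_ind: "inner (\<chi> j. c j) (to_real (ind X)) = sum c X"
  by (simp add: inner_to_real ind_def if_distrib sum.If_cases)

lemma inner_to_real_unitv_add_ind:
  "inner (\<chi> j. c j) (to_real (\<lambda>j. unitv q j + ind X j)) = c q + sum c X"
proof -
  have "(\<Sum>j\<in>UNIV. c j * real (unitv q j + ind X j)) =
      (\<Sum>j\<in>UNIV. c j * real (unitv q j)) + (\<Sum>j\<in>UNIV. c j * real (ind X j))"
    by (simp add: distrib_left sum.distrib)
  moreover have "(\<Sum>j\<in>UNIV. c j * real (unitv q j)) = c q"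
    unfolding unitv_def by (simp add: if_distrib cong: if_cong)
  ultimately show ?thesis
    using inner_to_real_ind[of c X] by (simp add: inner_to_real)
qed

lemma extreme_point_of_convex_hull_strict_max:
  fixes A :: "'a::euclidean_space set"
  assumes "finite A" "p \<in> A" "\<And>q. q \<in> A \<Longrightarrow> q \<noteq> p \<Longrightarrow> inner c q < inner c p"
  shows "p extreme_point_of convex hull A"
proof -
  have "convex hull (A - {p}) \<subseteq> {y. inner c y < inner c p}"
    using assms(3) by (intro hull_minimal) (auto simp: convex_halfspace_lt)
  then have "p \<notin> convex hull (A - {p})"
    by auto
  then have "p extreme_point_of convex hull (insert p (A - {p}))"
    using assms(1) by (intro extreme_point_of_convex_hull_insert) auto
  then show ?thesis
    using assms(2) by (simp add: insert_absorb)
qed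

definition separating_weight :: "'e set \<Rightarrow> 'e set \<Rightarrow> 'e \<Rightarrow> real" where
  "separating_weight S E j = (if j \<in> S then if j \<in> E then 0 else 1 else -2)"

lemma sum_separating_weight_not_subset:
  assumes "finite X" "finite S" "\<not> X \<subseteq> S"
  shows "sum (separating_weight S E) X \<le> sum (separating_weight S E) S - 2"
proof -
  let ?c = "separating_weight S E"
  have "sum ?c (X \<inter> S) \<le> sum ?c S"
    using assms(2) by (intro sum_mono2) (auto simp: separating_weight_def)
  moreover have "sum ?c (X - S) = - 2 * card (X - S)"
    by (simp add: separating_weight_def)
  moreover have "card (X - S) \<ge> 1"
    using assms(1,3) by (simp add: Suc_le_eq card_gt_0_iff)
  ultimately show ?thesis
    using assms(1) by (simp add: sum.Int_Diff[of X ?c S])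
qed

lemma sum_separating_weight_less:
  assumes "finite X" "finite S" "card X = card S" "X \<noteq> S"
  shows "sum (separating_weight S E) X < sum (separating_weight S E) S"
proof -
  have "\<not> X \<subseteq> S"
    using assms card_subset_eq by blast
  then show ?thesis
    using sum_separating_weight_not_subset[OF assms(1,2), of E] by linarith
qed

lemma sum_separating_weight_insert_less:
  assumes "finite Y" "finite S" "card S = card Y + 1" "q \<in> E"
    and "\<And>r. r \<notin> Y \<Longrightarrow> S = insert r Y \<Longrightarrow> r \<notin> E"
  shows "separating_weight S E q + sum (separating_weight S E) Y < sum (separating_weight S E) S"
proof -
  let ?c = "separating_weight S E"
  have "?c q \<le> 0"
    using assms(4) by (simp add: separating_weight_def)
  moreover have "sum ?c Y < sum ?c S"
  proof (cases "Y \<subseteq> S")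
    case True
    then have "card (S - Y) = 1"
      using assms(1,3) by (simp add: card_Diff_subset)
    then obtain r where "S - Y = {r}"
      by (rule card_1_singletonE)
    then have "r \<notin> Y" "S = insert r Y"
      using True by auto
    then have "sum ?c S = 1 + sum ?c Y"
      using assms(1,5) by (simp add: separating_weight_def)
    then show ?thesis
      by simp
  next
    case False
    then show ?thesis
      using sum_separating_weight_not_subset[OF assms(1,2) False, of E] by simp
  qed
  ultimately show ?thesis
    by simp
qed

lemma separating_weight_AG_less:
  fixes ends :: "'e::finite \<Rightarrow> 'v \<times> 'v" and p :: 'e and T0 S :: "'e set"
  defines "S \<equiv> insert p (- T0)"
  assumes V: "finite V" "V \<noteq> {}" "\<forall>e. fst (ends e) \<in> V \<and> snd (ends e) \<in> V"
    and T0: "T0 \<in> spanning_trees V ends" "p \<in> T0"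
    and mass_free: "\<forall>z m m'. Fpoly V ends L E z m (ind S) = Fpoly V ends L E z m' (ind S)"
    and b: "b \<in> AG V ends L E" "b \<noteq> ind S"
  shows "inner (\<chi> j. separating_weight S E j) (to_real b)
    < inner (\<chi> j. separating_weight S E j) (to_real (ind S))"
proof -
  let ?c = "separating_weight S E"
  have card_S: "card S = card (- T) + 1" if "T \<in> spanning_trees V ends" for T
  proof -
    have "card T = card T0"
      using card_spanning_tree[OF V that] card_spanning_tree[OF V T0(1)] by simp
    then show ?thesis
      using T0(2) by (simp add: S_def card_Compl_eq)
  qed
  have less_S: "inner (\<chi> j. ?c j) (to_real (ind X)) < inner (\<chi> j. ?c j) (to_real (ind S))"
    if "card X = card S" "X \<noteq> S" for X
    using that by (simp add: inner_to_real_ind sum_separating_weight_less)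
  from b(1) show ?thesis
  proof (cases rule: AG_cases)
    case (forest w)
    then have "card (- \<Union>(snd ` w)) = card S"
      using card_Compl_spanning_2forest[OF V T0(1)] card_S[OF T0(1)] by simp
    then show ?thesis
      using forest b(2) less_S by blast
  next
    case (mass q T)
    show ?thesis
    proof (cases "q \<in> T")
      case True
      then have "b = ind (insert q (- T))"
        using mass(3) by (simp add: unitv_add_ind)
      moreover have "card (insert q (- T)) = card S"
        using True card_S[OF mass(2)] by simp
      ultimately show ?thesis
        using b(2) less_S by blast
    next
      case False
      have "inner (\<chi> j. ?c j) (to_real b) = ?c q + sum ?c (- T)"
        using mass(3) by (simp add: inner_to_real_unitv_add_ind)
      also have "\<dots> < sum ?c S"
      proof (rule sum_separating_weight_insert_less)
        fix r assume "r \<notin> - T" "S = insert r (- T)"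
        then have "ind S = (\<lambda>j. unitv r j + ind (- T) j)"
          by (simp add: unitv_add_ind)
        then show "r \<notin> E"
          by (rule mass_free_coeff_notin[OF mass_free mass(2)])
      qed (use card_S[OF mass(2)] mass(1) in auto)
      finally show ?thesis
        by (simp add: inner_to_real_ind)
    qed
  qed
qed

theorem mainTheorem17:
  fixes V :: "'v set"
    and ends :: "'e::finite \<Rightarrow> 'v \<times> 'v"
    and L :: "('v set \<times> 'e set) set \<Rightarrow> real ^ 'k::finite \<Rightarrow> real"
    and E :: "'e set"
    and a :: "'e \<Rightarrow> nat"
  assumes "finite V" and "V \<noteq> {}"
    and "\<forall>e. fst (ends e) \<in> V \<and> snd (ends e) \<in> V"
    and "\<forall>u\<in>V. \<forall>v\<in>V. conn ends UNIV u v"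
    and "\<forall>w\<in>spanning_2forests V ends. linear (L w)"
    and "a \<in> AG V ends L E"
    and "a \<in> AG1 V ends"
    and "\<forall>z m m'. Fpoly V ends L E z m a = Fpoly V ends L E z m' a"
  shows "to_real a extreme_point_of (convex hull (to_real ` AG V ends L E))"
proof -
  obtain T0 p where T0: "T0 \<in> spanning_trees V ends" "p \<in> T0"
    and a_eq: "a = ind (insert p (- T0))"
    using assms(7) by (auto simp: AG1_def unitv_add_ind)
  let ?w = "\<chi> j. separating_weight (insert p (- T0)) E j"
  show ?thesis
  proof (rule extreme_point_of_convex_hull_strict_max)
    show "finite (to_real ` AG V ends L E)"
      using assms(1) by (simp add: finite_AG)
    show "to_real a \<in> to_real ` AG V ends L E"
      using assms(6) by simp
    fix q assume "q \<in> to_real ` AG V ends L E" "q \<noteq> to_real a"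
    then obtain b where "b \<in> AG V ends L E" "b \<noteq> a" "q = to_real b"
      by blast
    then show "inner ?w q < inner ?w (to_real a)"
      using separating_weight_AG_less[OF assms(1-3) T0] assms(8) a_eq by simp
  qed
qed

end
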